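(* Let $G$ be a connected chordal graph with at least two vertices. A vertex $v\in V(G)$ is an $\mathcal{L}$-branch leaf of some perfect elimination ordering of $G$ if and only if $v$ is simplicial in $G$.
   Context: Graphs are finite, simple, undirected. A graph is chordal if it has no induced cycle of length at least 4. A vertex is simplicial if its neighborhood is a clique. A vertex ordering $\sigma$ of $G$ (a bijection $\{1,\dots,n\}\to V(G)$, with $u\prec_\sigma w$ meaning $u$ comes before $w$) is a perfect elimination ordering (PEO) if every vertex $v$ is simplicial in the subgraph induced by $\{w : w\prec_\sigma v\}\cup\{v\}$, i.e., the neighbors of $v$ to its left form a clique. For an ordering $\sigma$ of a connected graph in which every vertex other than $\sigma(1)$ has a neighbor to its left (as is the case for PEOs of connected chordal graphs), the $\mathcal{L}$-tree of $\sigma$ is the spanning tree containing, for each $v\neq\sigma(1)$, the edge from $v$ to its rightmost neighbor $w$ with $w\prec_\sigma v$. A vertex $v\neq\sigma(1)$ that is a leaf of the $\mathcal{L}$-tree is an $\mathcal{L}$-branch leaf of $\sigma$. *)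

theory Defs
  imports Main
begin

definition graph :: "'a set \<Rightarrow> ('a \<Rightarrow> 'a \<Rightarrow> bool) \<Rightarrow> bool" where
  "graph V E \<longleftrightarrow> finite V \<and> (\<forall>x y. E x y \<longrightarrow> x \<in> V \<and> y \<in> V)
     \<and> (\<forall>x y. E x y \<longrightarrow> E y x) \<and> (\<forall>x. \<not> E x x)"

definition connected_graph :: "'a set \<Rightarrow> ('a \<Rightarrow> 'a \<Rightarrow> bool) \<Rightarrow> bool" where
  "connected_graph V E \<longleftrightarrow>
     (\<forall>u\<in>V. \<forall>w\<in>V. (\<lambda>x y. x \<in> V \<and> y \<in> V \<and> E x y)\<^sup>*\<^sup>* u w)"

definition induced_cycle :: "'a set \<Rightarrow> ('a \<Rightarrow> 'a \<Rightarrow> bool) \<Rightarrow> 'a list \<Rightarrow> bool" where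
  "induced_cycle V E c \<longleftrightarrow> length c \<ge> 3 \<and> distinct c \<and> set c \<subseteq> V \<and>
     (\<forall>i<length c. \<forall>j<length c.
        E (c!i) (c!j) \<longleftrightarrow> (j = Suc i mod length c \<or> i = Suc j mod length c))"

definition chordal :: "'a set \<Rightarrow> ('a \<Rightarrow> 'a \<Rightarrow> bool) \<Rightarrow> bool" where
  "chordal V E \<longleftrightarrow> (\<forall>c. induced_cycle V E c \<longrightarrow> length c < 4)"

definition simplicial :: "'a set \<Rightarrow> ('a \<Rightarrow> 'a \<Rightarrow> bool) \<Rightarrow> 'a \<Rightarrow> bool" where
  "simplicial V E v \<longleftrightarrow>
     (\<forall>u\<in>V. \<forall>w\<in>V. E v u \<and> E v w \<and> u \<noteq> w \<longrightarrow> E u w)"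

text \<open>A vertex ordering is a list enumerating V without repetition; position i (0-based)
corresponds to sigma(i+1).\<close>

definition vertex_ordering :: "'a set \<Rightarrow> 'a list \<Rightarrow> bool" where
  "vertex_ordering V \<sigma> \<longleftrightarrow> distinct \<sigma> \<and> set \<sigma> = V"

definition peo :: "'a set \<Rightarrow> ('a \<Rightarrow> 'a \<Rightarrow> bool) \<Rightarrow> 'a list \<Rightarrow> bool" where
  "peo V E \<sigma> \<longleftrightarrow> vertex_ordering V \<sigma> \<and>
     (\<forall>i<length \<sigma>. \<forall>j<i. \<forall>k<i.
        E (\<sigma>!i) (\<sigma>!j) \<and> E (\<sigma>!i) (\<sigma>!k) \<and> j \<noteq> k \<longrightarrow> E (\<sigma>!j) (\<sigma>!k))"

definition left_nbrs :: "('a \<Rightarrow> 'a \<Rightarrow> bool) \<Rightarrow> 'a list \<Rightarrow> nat \<Rightarrow> nat set" where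
  "left_nbrs E \<sigma> i = {j. j < i \<and> E (\<sigma>!i) (\<sigma>!j)}"

text \<open>Edges of the L-tree: for each position i > 0, the edge between sigma!i and its
rightmost left neighbour (the L-tree is only considered for orderings in which every
non-first vertex has a left neighbour).\<close>

definition ltree_edge :: "('a \<Rightarrow> 'a \<Rightarrow> bool) \<Rightarrow> 'a list \<Rightarrow> 'a \<Rightarrow> 'a \<Rightarrow> bool" where
  "ltree_edge E \<sigma> x y \<longleftrightarrow>
     (\<exists>i. 0 < i \<and> i < length \<sigma> \<and> left_nbrs E \<sigma> i \<noteq> {} \<and>
        ((x = \<sigma>!i \<and> y = \<sigma>!(Max (left_nbrs E \<sigma> i))) \<or>
         (y = \<sigma>!i \<and> x = \<sigma>!(Max (left_nbrs E \<sigma> i)))))"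

definition lbranch_leaf :: "('a \<Rightarrow> 'a \<Rightarrow> bool) \<Rightarrow> 'a list \<Rightarrow> 'a \<Rightarrow> bool" where
  "lbranch_leaf E \<sigma> v \<longleftrightarrow> v \<in> set \<sigma> \<and> v \<noteq> hd \<sigma> \<and> card {w. ltree_edge E \<sigma> v w} = 1"

end

theory Submission
  imports Defs
begin

text \<open>If v is simplicial, put it last in a perfect elimination ordering of G - v; such an ordering
  exists because every chordal graph has a simplicial vertex (Dirac). The last vertex has no
  L-tree children, and it has a parent because in a perfect elimination ordering of a connected
  graph every vertex but the first has a left neighbour (a shortest path leaving to the left
  would otherwise have an interior vertex maximal in the ordering whose two path neighbours are
  adjacent). Conversely, if an L-branch leaf v had a right neighbour, the first one would have v
  as its rightmost left neighbour, making it an L-tree child of v besides v's parent; so all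
  neighbours of v lie to its left, where they form a clique.\<close>

definition walk :: "('a \<Rightarrow> 'a \<Rightarrow> bool) \<Rightarrow> (nat \<Rightarrow> 'a) \<Rightarrow> nat \<Rightarrow> bool" where
  "walk r f n \<longleftrightarrow> (\<forall>k<n. r (f k) (f (Suc k)))"

definition induced_path :: "('a \<Rightarrow> 'a \<Rightarrow> bool) \<Rightarrow> (nat \<Rightarrow> 'a) \<Rightarrow> nat \<Rightarrow> bool" where
  "induced_path E f n \<longleftrightarrow> inj_on f {..n} \<and>
     (\<forall>i\<le>n. \<forall>j\<le>n. E (f i) (f j) \<longleftrightarrow> j = Suc i \<or> i = Suc j)"

definition induced_edges :: "('a \<Rightarrow> 'a \<Rightarrow> bool) \<Rightarrow> 'a set \<Rightarrow> 'a \<Rightarrow> 'a \<Rightarrow> bool" where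
  "induced_edges E W = (\<lambda>x y. x \<in> W \<and> y \<in> W \<and> E x y)"

lemma graph_sym: "graph V E \<Longrightarrow> E x y \<Longrightarrow> E y x"
  unfolding graph_def by blast

lemma graph_irrefl: "graph V E \<Longrightarrow> \<not> E x x"
  unfolding graph_def by blast

lemma graph_in_vertices: "graph V E \<Longrightarrow> E x y \<Longrightarrow> x \<in> V \<and> y \<in> V"
  unfolding graph_def by blast

lemma graph_induced_edges: "graph V E \<Longrightarrow> W \<subseteq> V \<Longrightarrow> graph W (induced_edges E W)"
  unfolding graph_def induced_edges_def by (auto intro: finite_subset)

lemma chordal_induced_edges: "chordal V E \<Longrightarrow> W \<subseteq> V \<Longrightarrow> chordal W (induced_edges E W)"
  unfolding chordal_def induced_cycle_def induced_edges_def by (auto 0 4 simp: subset_iff)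

lemma walk_prefix: "walk r f n \<Longrightarrow> m \<le> n \<Longrightarrow> walk r f m"
  unfolding walk_def by auto

lemma rtranclp_induced_edges_imp_walk:
  assumes "(induced_edges E W)\<^sup>*\<^sup>* x y" "x \<in> W"
  shows "\<exists>f n. walk E f n \<and> f 0 = x \<and> f n = y \<and> f ` {..n} \<subseteq> W"
  using assms(1)
proof (induction rule: rtranclp_induct)
  case base
  show ?case
    using assms(2) by (intro exI[of _ "\<lambda>_. x"] exI[of _ 0]) (auto simp: walk_def)
next
  case (step y z)
  then obtain f n where "walk E f n" "f 0 = x" "f n = y" "f ` {..n} \<subseteq> W"
    by blast
  then show ?case
    using step.hyps(2) unfolding induced_edges_def
    by (intro exI[of _ "f(Suc n := z)"] exI[of _ "Suc n"])
       (auto simp: walk_def less_Suc_eq le_Suc_eq)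
qed

lemma walk_shortcut:
  assumes "walk r f n" "i < j" "j \<le> n" "r (f i) (f j)"
  shows "\<exists>g. walk r g (n - (j - Suc i)) \<and> g 0 = f 0 \<and> g (n - (j - Suc i)) = f n \<and>
    g ` {..n - (j - Suc i)} \<subseteq> f ` {..n}"
proof (intro exI conjI)
  define g where "g m = (if m \<le> i then f m else f (m + (j - Suc i)))" for m
  show "walk r g (n - (j - Suc i))"
    unfolding walk_def
  proof (intro allI impI)
    fix k assume k: "k < n - (j - Suc i)"
    consider "k < i" | "k = i" | "i < k" by linarith
    then show "r (g k) (g (Suc k))"
    proof cases
      case 1
      then show ?thesis
        using assms(1,3) k unfolding walk_def g_def by simp
    next
      case 2
      then show ?thesis
        using assms(2,4) unfolding g_def by simp
    next
      case 3
      then have "k + (j - Suc i) < n" "Suc k + (j - Suc i) = Suc (k + (j - Suc i))"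
        using k assms(2) by auto
      then show ?thesis
        using assms(1) 3 unfolding walk_def g_def by auto
    qed
  qed
  show "g 0 = f 0" "g (n - (j - Suc i)) = f n"
    using assms(2,3) unfolding g_def by auto
  show "g ` {..n - (j - Suc i)} \<subseteq> f ` {..n}"
    using assms(2,3) unfolding g_def by auto
qed

lemma walk_repeat_or_chord:
  assumes "graph V E" "walk E f n" "\<not> induced_path E f n"
  obtains (repeat) i j where "i < j" "j \<le> n" "f i = f j"
    | (chord) i j where "Suc i < j" "j \<le> n" "E (f i) (f j)"
proof (cases "inj_on f {..n}")
  case False
  then obtain i j where "i \<le> n" "j \<le> n" "i \<noteq> j" "f i = f j"
    unfolding inj_on_def by auto
  then show thesis
    using repeat[of i j] repeat[of j i] by (cases "i < j") auto
next
  case True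
  have path_edge: "E (f i) (f j)" if "j = Suc i \<or> i = Suc j" "i \<le> n" "j \<le> n" for i j
    using assms(2) that graph_sym[OF assms(1)] unfolding walk_def by (auto simp: Suc_le_eq)
  obtain i j where ij: "i \<le> n" "j \<le> n" "E (f i) (f j) \<noteq> (j = Suc i \<or> i = Suc j)"
    using True assms(3) unfolding induced_path_def by blast
  then have "E (f i) (f j)" "j \<noteq> Suc i" "i \<noteq> Suc j"
    using path_edge by blast+
  moreover have "i \<noteq> j"
    using \<open>E (f i) (f j)\<close> graph_irrefl[OF assms(1)] by metis
  ultimately show thesis
    using ij(1,2) chord[of i j] chord[of j i] graph_sym[OF assms(1)]
    by (cases "i < j") (auto simp: Suc_lessI)
qed

lemma walk_imp_induced_path:
  assumes "graph V E" "walk E f n"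
  shows "\<exists>g m. induced_path E g m \<and> g 0 = f 0 \<and> g m = f n \<and> g ` {..m} \<subseteq> f ` {..n}"
  using assms(2)
proof (induction n arbitrary: f rule: less_induct)
  case (less n f)
  have by_shorter: ?case
    if shorter: "walk E g m" "m < n" "g 0 = f 0" "g m = f n" "g ` {..m} \<subseteq> f ` {..n}" for g m
  proof -
    obtain h k where "induced_path E h k" "h 0 = g 0" "h k = g m" "h ` {..k} \<subseteq> g ` {..m}"
      using less.IH[OF shorter(2,1)] by blast
    then show ?case
      using shorter(3-5) by (intro exI[of _ h] exI[of _ k]) auto
  qed
  show ?case
  proof (cases "induced_path E f n")
    case True
    then show ?thesis by blast
  next
    case False
    with assms(1) less.prems show ?thesis
    proof (cases rule: walk_repeat_or_chord)
      case (repeat i j)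
      show ?thesis
      proof (cases "j = n")
        case True
        show ?thesis
          by (rule by_shorter[OF walk_prefix[OF less.prems, of i]]) (use repeat True in auto)
      next
        case False
        then have "Suc j \<le> n"
          using repeat by auto
        moreover have "E (f i) (f (Suc j))"
          using less.prems repeat calculation unfolding walk_def by auto
        ultimately obtain g where "walk E g (n - (j - i))" "g 0 = f 0" "g (n - (j - i)) = f n"
          "g ` {..n - (j - i)} \<subseteq> f ` {..n}"
          using walk_shortcut[OF less.prems less_SucI[OF repeat(1)]] by auto
        then show ?thesis
          using repeat by (intro by_shorter) auto
      qed
    next
      case (chord i j)
      then obtain g where "walk E g (n - (j - Suc i))" "g 0 = f 0" "g (n - (j - Suc i)) = f n"
        "g ` {..n - (j - Suc i)} \<subseteq> f ` {..n}"
        using walk_shortcut[OF less.prems, of i j] by auto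
      then show ?thesis
        using chord by (intro by_shorter) auto
    qed
  qed
qed

lemma walk_imp_induced_path_entering:
  assumes "graph V E" "walk E f n" "f 0 \<notin> L" "f n \<in> L"
  obtains g m where "induced_path E g m" "g 0 = f 0" "g m \<in> L" "\<forall>k<m. g k \<notin> L"
    "g ` {..m} \<subseteq> f ` {..n}"
proof -
  define t where "t = (LEAST t. f t \<in> L)"
  have t: "f t \<in> L" "t \<le> n" "\<And>k. k < t \<Longrightarrow> f k \<notin> L"
    using assms(4) unfolding t_def by (auto intro: LeastI Least_le dest: not_less_Least)
  obtain g m where g: "induced_path E g m" "g 0 = f 0" "g m = f t" "g ` {..m} \<subseteq> f ` {..t}"
    using walk_imp_induced_path[OF assms(1) walk_prefix[OF assms(2) t(2)]] by metis
  have "g k \<notin> L" if "k < m" for k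
  proof -
    have "g k \<noteq> g m"
      using g(1) that unfolding induced_path_def inj_on_def by fastforce
    moreover have "g k \<in> f ` {..t}"
      using g(4) that by auto
    ultimately obtain k' where "k' < t" "g k = f k'"
      using g(3) by (metis atMost_iff image_iff le_neq_implies_less)
    then show ?thesis
      using t(3) by simp
  qed
  moreover have "f ` {..t} \<subseteq> f ` {..n}"
    using t(2) by (intro image_mono) auto
  ultimately show thesis
    using that g t(1) by (metis order_trans)
qed

lemma induced_cycle_apex:
  assumes "graph V E" "induced_path E f p" "1 \<le> p" "f ` {..p} \<subseteq> V"
    "a \<in> V" "a \<notin> f ` {..p}" "\<And>k. k \<le> p \<Longrightarrow> E a (f k) \<longleftrightarrow> k = 0 \<or> k = p"
  shows "induced_cycle V E (a # map f [0..<Suc p])"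
proof -
  let ?c = "a # map f [0..<Suc p]"
  have nth_c: "?c ! Suc k = f k" if "k \<le> p" for k
    using that by (simp del: upt_Suc)
  have set_upt: "set [0..<Suc p] = {..p}"
    by (simp only: set_upt atLeast0LessThan lessThan_Suc_atMost)
  have "distinct ?c"
    using assms(2,6) set_upt unfolding induced_path_def by (simp add: distinct_map del: upt_Suc)
  moreover have "set ?c \<subseteq> V"
    using assms(4,5) set_upt by (simp del: upt_Suc)
  moreover have "E (?c ! i) (?c ! j) \<longleftrightarrow> j = Suc i mod length ?c \<or> i = Suc j mod length ?c"
    if "i < length ?c" "j < length ?c" for i j
  proof -
    have mod_len: "Suc k mod length ?c = (if k = Suc p then 0 else Suc k)" if "k \<le> Suc p" for k
      using that by simp
    consider "i = 0" "j = 0" | i' where "i = Suc i'" "j = 0" | j' where "i = 0" "j = Suc j'"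
      | i' j' where "i = Suc i'" "j = Suc j'"
      by (cases i; cases j) auto
    then show ?thesis
    proof cases
      case 1
      then show ?thesis
        using graph_irrefl[OF assms(1)] by simp
    next
      case (2 i')
      then show ?thesis
        using assms(7)[of i'] graph_sym[OF assms(1)] that nth_c[of i'] mod_len[of "Suc i'"] mod_len[of 0]
        by auto
    next
      case (3 j')
      then show ?thesis
        using assms(7)[of j'] that nth_c[of j'] mod_len[of "Suc j'"] mod_len[of 0] by auto
    next
      case (4 i' j')
      then show ?thesis
        using assms(2) that nth_c[of i'] nth_c[of j'] mod_len[of "Suc i'"] mod_len[of "Suc j'"]
        unfolding induced_path_def by auto
    qed
  qed
  ultimately show ?thesis
    using assms(3) unfolding induced_cycle_def by auto
qed

lemma chordal_common_neighbours_adjacent: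
  assumes "graph V E" "chordal V E" "E a x" "E a y" "x \<noteq> y"
    and "(induced_edges E (R \<union> {x, y}))\<^sup>*\<^sup>* x y" "R \<subseteq> V" "\<forall>r\<in>R. r \<noteq> a \<and> \<not> E a r"
  shows "E x y"
proof (rule ccontr)
  assume "\<not> E x y"
  obtain f n where "walk E f n" "f 0 = x" "f n = y" "f ` {..n} \<subseteq> R \<union> {x, y}"
    using rtranclp_induced_edges_imp_walk[OF assms(6)] by blast
  then obtain g p where g: "induced_path E g p" "g 0 = x" "g p = y" "g ` {..p} \<subseteq> R \<union> {x, y}"
    using walk_imp_induced_path[OF assms(1)] by (metis order_trans)
  have "p \<noteq> 0"
    using g(2,3) assms(5) by (metis)
  moreover have "p \<noteq> 1"
    using g \<open>\<not> E x y\<close> unfolding induced_path_def by auto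
  ultimately have "2 \<le> p"
    by linarith
  have interior: "g k \<in> R" if "0 < k" "k < p" for k
  proof -
    have "g k \<noteq> g 0" "g k \<noteq> g p"
      using g(1) that unfolding induced_path_def inj_on_def by fastforce+
    moreover have "g k \<in> R \<union> {x, y}"
      using g(4) that(2) by (auto simp: image_subset_iff)
    ultimately show ?thesis
      using g(2,3) by auto
  qed
  have "induced_cycle V E (a # map g [0..<Suc p])"
  proof (rule induced_cycle_apex[OF assms(1) g(1)])
    show "g ` {..p} \<subseteq> V"
      using g(4) assms(7) graph_in_vertices[OF assms(1) assms(3)] graph_in_vertices[OF assms(1) assms(4)]
      by blast
    show "a \<in> V"
      using graph_in_vertices[OF assms(1) assms(3)] by blast
    show "a \<notin> g ` {..p}"
    proof
      assume "a \<in> g ` {..p}"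
      then obtain k where "k \<le> p" "g k = a" by blast
      then show False
        using interior[of k] assms(3,4,8) g(2,3) graph_irrefl[OF assms(1)]
        by (cases "k = 0"; cases "k = p") auto
    qed
    show "E a (g k) \<longleftrightarrow> k = 0 \<or> k = p" if "k \<le> p" for k
      using interior[of k] assms(3,4,8) g(2,3) that by (cases "0 < k \<and> k < p") auto
  qed (use \<open>2 \<le> p\<close> in simp)
  then have "length (a # map g [0..<Suc p]) < 4"
    using assms(2) unfolding chordal_def by blast
  then show False
    using \<open>2 \<le> p\<close> by simp
qed

lemma simplicial_if_simplicial_induced:
  assumes "simplicial W (induced_edges E W) c" "c \<in> W" "\<And>u. E c u \<Longrightarrow> u \<in> W"
  shows "simplicial V E c"
  using assms unfolding simplicial_def induced_edges_def by blast

definition far_component :: "'a set \<Rightarrow> ('a \<Rightarrow> 'a \<Rightarrow> bool) \<Rightarrow> 'a \<Rightarrow> 'a \<Rightarrow> 'a set" where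
  "far_component V E a b = {c. (induced_edges E {x \<in> V. x \<noteq> a \<and> \<not> E a x})\<^sup>*\<^sup>* b c}"

lemma far_component_subset:
  assumes "b \<in> V" "b \<noteq> a" "\<not> E a b"
  shows "far_component V E a b \<subseteq> {x \<in> V. x \<noteq> a \<and> \<not> E a x}"
proof
  fix c assume "c \<in> far_component V E a b"
  then have "(induced_edges E {x \<in> V. x \<noteq> a \<and> \<not> E a x})\<^sup>*\<^sup>* b c"
    unfolding far_component_def by simp
  then show "c \<in> {x \<in> V. x \<noteq> a \<and> \<not> E a x}"
    by (induction rule: rtranclp_induct) (use assms in \<open>auto simp: induced_edges_def\<close>)
qed

lemma far_component_boundary_nbr:
  assumes "graph V E" "b \<in> V" "b \<noteq> a" "\<not> E a b"
    and "c \<in> far_component V E a b" "E c s" "s \<notin> far_component V E a b"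
  shows "E a s"
proof -
  let ?R = "{x \<in> V. x \<noteq> a \<and> \<not> E a x}"
  have "c \<in> ?R"
    using far_component_subset[where E = E, OF assms(2-4)] assms(5) by blast
  have "s \<notin> ?R"
  proof
    assume "s \<in> ?R"
    then have "induced_edges E ?R c s"
      using \<open>c \<in> ?R\<close> assms(6) unfolding induced_edges_def by blast
    then show False
      using assms(5,7) unfolding far_component_def by (simp add: rtranclp.rtrancl_into_rtrancl)
  qed
  moreover have "s \<noteq> a"
    using \<open>c \<in> ?R\<close> assms(6) graph_sym[OF assms(1)] by blast
  ultimately show ?thesis
    using graph_in_vertices[OF assms(1) assms(6)] by blast
qed

lemma far_component_boundary_clique:
  assumes "graph V E" "chordal V E" "b \<in> V" "b \<noteq> a" "\<not> E a b"
    and "c1 \<in> far_component V E a b" "c2 \<in> far_component V E a b"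
    and "E c1 x" "E c2 y" "x \<notin> far_component V E a b" "y \<notin> far_component V E a b" "x \<noteq> y"
  shows "E x y"
proof -
  let ?R = "{x \<in> V. x \<noteq> a \<and> \<not> E a x}"
  have "c1 \<in> ?R" "c2 \<in> ?R"
    using far_component_subset[where E = E, OF assms(3-5)] assms(6,7) by blast+
  have "symp (induced_edges E ?R)"
    using graph_sym[OF assms(1)] unfolding induced_edges_def symp_def by blast
  then have "symp (induced_edges E ?R)\<^sup>*\<^sup>*"
    by (rule symp_rtranclp)
  then have "(induced_edges E ?R)\<^sup>*\<^sup>* c1 b"
    using assms(6) unfolding far_component_def by (simp add: sympD)
  then have "(induced_edges E ?R)\<^sup>*\<^sup>* c1 c2"
    using assms(7) unfolding far_component_def by simp
  then have "(induced_edges E (?R \<union> {x, y}))\<^sup>*\<^sup>* c1 c2"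
    by (rule rtranclp_mono[THEN predicate2D, rotated]) (auto simp: induced_edges_def)
  moreover have "induced_edges E (?R \<union> {x, y}) x c1" "induced_edges E (?R \<union> {x, y}) c2 y"
    using \<open>c1 \<in> ?R\<close> \<open>c2 \<in> ?R\<close> assms(8,9) graph_sym[OF assms(1)] unfolding induced_edges_def by auto
  ultimately have "(induced_edges E (?R \<union> {x, y}))\<^sup>*\<^sup>* x y"
    by (meson converse_rtranclp_into_rtranclp rtranclp.rtrancl_into_rtrancl)
  moreover have "E a x" "E a y"
    using far_component_boundary_nbr[where E = E, OF assms(1,3-5)] assms(6-11) by blast+
  ultimately show ?thesis
    using chordal_common_neighbours_adjacent[OF assms(1,2)] assms(12) by blast
qed

lemma simplicial_outside_clique:
  assumes "graph W F" "b \<in> W - S" "S \<subseteq> W" "\<forall>x\<in>S. \<forall>y\<in>S. x \<noteq> y \<longrightarrow> F x y"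
    and "\<And>p z. p \<in> W \<Longrightarrow> z \<in> W \<Longrightarrow> z \<noteq> p \<Longrightarrow> \<not> F p z \<Longrightarrow>
      \<exists>s\<in>W. simplicial W F s \<and> s \<noteq> p \<and> \<not> F p s"
  shows "\<exists>s\<in>W - S. simplicial W F s"
proof (cases "\<forall>u\<in>W. \<forall>w\<in>W. u \<noteq> w \<longrightarrow> F u w")
  case True
  then have "simplicial W F b"
    unfolding simplicial_def by blast
  then show ?thesis
    using assms(2) by blast
next
  case False
  obtain p z where p: "p \<in> W" "z \<in> W" "z \<noteq> p" "\<not> F p z" "\<forall>s\<in>S. s \<noteq> p \<longrightarrow> F p s"
  proof (cases "\<exists>s\<in>S. \<exists>z\<in>W. z \<noteq> s \<and> \<not> F s z")
    case True
    then obtain s z where "s \<in> S" "z \<in> W" "z \<noteq> s" "\<not> F s z"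
      by blast
    moreover have "\<forall>s'\<in>S. s' \<noteq> s \<longrightarrow> F s s'"
      using assms(4) \<open>s \<in> S\<close> by metis
    ultimately show thesis
      using that assms(3) by blast
  next
    case S_universal: False
    obtain x y where xy: "x \<in> W" "y \<in> W" "x \<noteq> y" "\<not> F x y"
      using False by blast
    then have "x \<notin> S"
      using S_universal by auto
    moreover have "F x s" if "s \<in> S" "s \<noteq> x" for s
      using that xy(1) S_universal graph_sym[OF assms(1)] by metis
    ultimately show thesis
      using that xy by blast
  qed
  then obtain s where "s \<in> W" "simplicial W F s" "s \<noteq> p" "\<not> F p s"
    using assms(5) by blast
  moreover have "s \<notin> S"
    using calculation(3,4) p(5) by blast
  ultimately show ?thesis
    by blast
qed

text \<open>Dirac's argument: with C the component of b in G - N[a] and S its neighbourhood, S is a clique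
  contained in N(a); induction on G[C \<union> S], which avoids a, yields a simplicial vertex in C, and
  all its neighbours lie in C \<union> S.\<close>

lemma chordal_simplicial_nonadjacent:
  assumes "graph V E" "chordal V E" "a \<in> V" "b \<in> V" "b \<noteq> a" "\<not> E a b"
  shows "\<exists>s\<in>V. simplicial V E s \<and> s \<noteq> a \<and> \<not> E a s"
  using assms
proof (induction "card V" arbitrary: V E a b rule: less_induct)
  case less
  note G = less.prems(1) and far = less.prems(4-6)
  define C where "C = far_component V E a b"
  define S where "S = {s \<in> V - C. \<exists>c\<in>C. E c s}"
  define W where "W = C \<union> S"
  have C_far: "C \<subseteq> {x \<in> V. x \<noteq> a \<and> \<not> E a x}"
    unfolding C_def by (rule far_component_subset[where E = E, OF far])
  have b_C: "b \<in> C"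
    unfolding C_def far_component_def by simp
  have W_V: "W \<subseteq> V"
    using C_far unfolding W_def S_def by blast
  have "a \<notin> W"
    using C_far far_component_boundary_nbr[where E = E, OF G far] graph_irrefl[OF G]
    unfolding W_def S_def C_def by blast
  then have card_W: "card W < card V"
    using W_V less.prems(3) G unfolding graph_def by (metis psubsetI psubset_card_mono)
  have "\<exists>c\<in>W - S. simplicial W (induced_edges E W) c"
  proof (rule simplicial_outside_clique[OF graph_induced_edges[OF G W_V]])
    show "b \<in> W - S" "S \<subseteq> W"
      using b_C unfolding W_def S_def by auto
    show "\<forall>x\<in>S. \<forall>y\<in>S. x \<noteq> y \<longrightarrow> induced_edges E W x y"
      using far_component_boundary_clique[where E = E, OF G less.prems(2) far] \<open>S \<subseteq> W\<close>
      unfolding S_def C_def induced_edges_def by blast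
    show "\<exists>s\<in>W. simplicial W (induced_edges E W) s \<and> s \<noteq> p \<and> \<not> induced_edges E W p s"
      if "p \<in> W" "z \<in> W" "z \<noteq> p" "\<not> induced_edges E W p z" for p z
      using less.hyps[OF card_W graph_induced_edges[OF G W_V] chordal_induced_edges[OF less.prems(2) W_V]]
        that by blast
  qed
  then obtain c where c: "c \<in> C" "simplicial W (induced_edges E W) c"
    unfolding W_def by blast
  have "simplicial V E c"
  proof (rule simplicial_if_simplicial_induced[OF c(2)])
    show "c \<in> W"
      using c(1) unfolding W_def by blast
    show "u \<in> W" if "E c u" for u
      using c(1) that graph_in_vertices[OF G] unfolding W_def S_def by blast
  qed
  then show ?case
    using c(1) C_far by blast
qed

lemma chordal_has_simplicial:
  assumes "graph V E" "chordal V E" "V \<noteq> {}"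
  shows "\<exists>s\<in>V. simplicial V E s"
proof (cases "\<exists>a\<in>V. \<exists>b\<in>V. b \<noteq> a \<and> \<not> E a b")
  case True
  then show ?thesis
    using chordal_simplicial_nonadjacent[OF assms(1,2)] by blast
next
  case False
  then have "simplicial V E s" for s
    unfolding simplicial_def by auto
  then show ?thesis
    using assms(3) by blast
qed

lemma peo_left_nbrs_adjacent:
  assumes "peo V E \<sigma>" "i < length \<sigma>" "j < i" "k < i" "j \<noteq> k"
    and "E (\<sigma> ! i) (\<sigma> ! j)" "E (\<sigma> ! i) (\<sigma> ! k)"
  shows "E (\<sigma> ! j) (\<sigma> ! k)"
  using assms unfolding peo_def by blast

lemma peo_snoc:
  assumes "peo (V - {v}) (induced_edges E (V - {v})) \<sigma>" "v \<in> V" "simplicial V E v"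
  shows "peo V E (\<sigma> @ [v])"
  unfolding peo_def
proof (intro conjI allI impI)
  have \<sigma>: "distinct \<sigma>" "set \<sigma> = V - {v}"
    using assms(1) unfolding peo_def vertex_ordering_def by auto
  then show "vertex_ordering V (\<sigma> @ [v])"
    using assms(2) unfolding vertex_ordering_def by auto
  fix i j k
  assume i: "i < length (\<sigma> @ [v])" and jk: "j < i" "k < i"
    and e: "E ((\<sigma> @ [v]) ! i) ((\<sigma> @ [v]) ! j) \<and> E ((\<sigma> @ [v]) ! i) ((\<sigma> @ [v]) ! k) \<and> j \<noteq> k"
  have jk_\<sigma>: "j < length \<sigma>" "k < length \<sigma>"
    using i jk by auto
  then have nth_jk: "(\<sigma> @ [v]) ! j = \<sigma> ! j" "(\<sigma> @ [v]) ! k = \<sigma> ! k"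
    by (auto simp: nth_append)
  have in_\<sigma>: "\<sigma> ! j \<in> V - {v}" "\<sigma> ! k \<in> V - {v}"
    using jk_\<sigma> \<sigma>(2) nth_mem by blast+
  show "E ((\<sigma> @ [v]) ! j) ((\<sigma> @ [v]) ! k)"
  proof (cases "i < length \<sigma>")
    case True
    then have "\<sigma> ! i \<in> V - {v}" "(\<sigma> @ [v]) ! i = \<sigma> ! i"
      using \<sigma>(2) nth_mem by (auto simp: nth_append)
    then show ?thesis
      using assms(1) True jk e nth_jk in_\<sigma> unfolding peo_def induced_edges_def by metis
  next
    case False
    then have "(\<sigma> @ [v]) ! i = v"
      using i by (auto simp: nth_append)
    moreover have "\<sigma> ! j \<noteq> \<sigma> ! k"
      using \<sigma>(1) jk_\<sigma> e nth_eq_iff_index_eq by blast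
    ultimately show ?thesis
      using assms(3) e nth_jk in_\<sigma> unfolding simplicial_def by auto
  qed
qed

lemma chordal_has_peo:
  assumes "graph V E" "chordal V E"
  shows "\<exists>\<sigma>. peo V E \<sigma>"
  using assms
proof (induction "card V" arbitrary: V E rule: less_induct)
  case less
  show ?case
  proof (cases "V = {}")
    case True
    then have "peo V E []"
      unfolding peo_def vertex_ordering_def by simp
    then show ?thesis ..
  next
    case False
    then obtain s where s: "s \<in> V" "simplicial V E s"
      using chordal_has_simplicial[OF less.prems] by blast
    have "card (V - {s}) < card V"
      using s(1) less.prems(1) unfolding graph_def by (meson card_Diff1_less)
    then obtain \<sigma> where "peo (V - {s}) (induced_edges E (V - {s})) \<sigma>"
      using less.hyps graph_induced_edges[OF less.prems(1)] chordal_induced_edges[OF less.prems(2)]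
      by (metis Diff_subset)
    then show ?thesis
      using peo_snoc[OF _ s] by blast
  qed
qed

lemma peo_induced_path_length_le_1:
  assumes "peo V E \<sigma>" "induced_path E g m"
    and "\<forall>k\<le>m. q k < length \<sigma> \<and> \<sigma> ! q k = g k"
    and "\<forall>k. 0 < k \<and> k < m \<longrightarrow> q 0 < q k \<and> q m < q k"
  shows "m \<le> 1"
proof (rule ccontr)
  assume "\<not> m \<le> 1"
  define K where "K = {0<..<m}"
  have "finite K" "1 \<in> K"
    using \<open>\<not> m \<le> 1\<close> unfolding K_def by auto
  then have "Max (q ` K) \<in> q ` K"
    by (intro Max_in) auto
  then obtain k where k: "k \<in> K" "q k = Max (q ` K)"
    by (metis imageE)
  have q_inj: "q i \<noteq> q j" if "i \<le> m" "j \<le> m" "i \<noteq> j" for i j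
    using assms(2,3) that unfolding induced_path_def inj_on_def by (metis atMost_iff)
  have left_of_k: "q j < q k" if "j \<le> m" "j \<noteq> k" for j
  proof (cases "j \<in> K")
    case True
    then have "q j \<le> q k"
      using k(2) \<open>finite K\<close> by simp
    then show ?thesis
      using q_inj[of j k] that k(1) unfolding K_def by fastforce
  next
    case False
    then have "j = 0 \<or> j = m"
      using that(1) unfolding K_def by auto
    then show ?thesis
      using assms(4) k(1) unfolding K_def by auto
  qed
  have range: "k - 1 \<le> m" "k \<le> m" "Suc k \<le> m" "k - 1 \<noteq> k" "Suc k \<noteq> k" "k - 1 \<noteq> Suc k"
    using k(1) unfolding K_def by auto
  have "E (g k) (g (k - 1))" "E (g k) (g (Suc k))"
    using assms(2) range k(1) unfolding induced_path_def K_def by auto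
  moreover have "q (k - 1) < q k" "q (Suc k) < q k" "q (k - 1) \<noteq> q (Suc k)" "q k < length \<sigma>"
    using range left_of_k q_inj assms(3) by auto
  ultimately have "E (g (k - 1)) (g (Suc k))"
    using peo_left_nbrs_adjacent[OF assms(1), of "q k" "q (k - 1)" "q (Suc k)"] range assms(3)
    by simp
  then show False
    using assms(2) range k(1) unfolding induced_path_def K_def by auto
qed

lemma peo_has_left_nbr:
  assumes "graph V E" "connected_graph V E" "peo V E \<sigma>" "0 < i" "i < length \<sigma>"
  shows "left_nbrs E \<sigma> i \<noteq> {}"
proof -
  have \<sigma>: "distinct \<sigma>" "set \<sigma> = V"
    using assms(3) unfolding peo_def vertex_ordering_def by auto
  define L where "L = set (take i \<sigma>)"
  have in_L: "\<sigma> ! j \<in> L \<longleftrightarrow> j < i" if "j < length \<sigma>" for j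
    using that \<sigma>(1) unfolding L_def
    by (metis in_set_conv_nth length_take min_less_iff_conj nth_eq_iff_index_eq nth_take)
  have "0 < length \<sigma>"
    using assms(4,5) by linarith
  then have "\<sigma> ! i \<in> V" "\<sigma> ! 0 \<in> V"
    using assms(5) \<sigma>(2) nth_mem by blast+
  then have "(induced_edges E V)\<^sup>*\<^sup>* (\<sigma> ! i) (\<sigma> ! 0)"
    using assms(2) unfolding connected_graph_def induced_edges_def by blast
  then obtain f n where f: "walk E f n" "f 0 = \<sigma> ! i" "f n = \<sigma> ! 0" "f ` {..n} \<subseteq> V"
    using rtranclp_induced_edges_imp_walk \<open>\<sigma> ! i \<in> V\<close> by metis
  have "f 0 \<notin> L" "f n \<in> L"
    using f(2,3) in_L[OF assms(5)] in_L[OF \<open>0 < length \<sigma>\<close>] assms(4) by simp_all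
  obtain g m where g: "induced_path E g m" "g 0 = f 0" "g m \<in> L"
    "\<forall>k<m. g k \<notin> L" "g ` {..m} \<subseteq> f ` {..n}"
    by (rule walk_imp_induced_path_entering[OF assms(1) f(1) \<open>f 0 \<notin> L\<close> \<open>f n \<in> L\<close>])
  then have "\<forall>k\<le>m. \<exists>j<length \<sigma>. \<sigma> ! j = g k"
    using f(4) \<sigma>(2) by (fastforce simp: in_set_conv_nth[symmetric])
  then obtain q where q: "\<forall>k\<le>m. q k < length \<sigma> \<and> \<sigma> ! q k = g k"
    by metis
  have "q 0 = i"
    using q g(2) f(2) assms(5) \<sigma>(1) nth_eq_iff_index_eq by fastforce
  have "q m < i"
    using q g(3) in_L[of "q m"] by simp
  have "i < q k" if "0 < k" "k < m" for k
  proof -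
    have "\<not> q k < i"
      using q g(4) in_L[of "q k"] that by simp
    moreover have "g k \<noteq> g 0"
      using g(1) that unfolding induced_path_def inj_on_def by fastforce
    then have "q k \<noteq> i"
      using q \<open>q 0 = i\<close> that by (metis le0 less_imp_le)
    ultimately show ?thesis
      by simp
  qed
  then have "m \<le> 1"
    by (intro peo_induced_path_length_le_1[OF assms(3) g(1) q])
      (use \<open>q 0 = i\<close> \<open>q m < i\<close> in \<open>auto intro: less_trans\<close>)
  moreover have "m \<noteq> 0"
    using g(2,3) \<open>f 0 \<notin> L\<close> by (metis)
  ultimately have "E (g 0) (g m)"
    using g(1) unfolding induced_path_def by auto
  then have "E (\<sigma> ! i) (\<sigma> ! q m)"
    using g(2) f(2) q by simp
  then show ?thesis
    using \<open>q m < i\<close> unfolding left_nbrs_def by blast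
qed

lemma left_nbrs_Max:
  assumes "left_nbrs E \<sigma> i \<noteq> {}"
  shows "Max (left_nbrs E \<sigma> i) < i" "E (\<sigma> ! i) (\<sigma> ! Max (left_nbrs E \<sigma> i))"
proof -
  have "finite (left_nbrs E \<sigma> i)"
    unfolding left_nbrs_def by simp
  then have "Max (left_nbrs E \<sigma> i) \<in> left_nbrs E \<sigma> i"
    using assms by (rule Max_in)
  then show "Max (left_nbrs E \<sigma> i) < i" "E (\<sigma> ! i) (\<sigma> ! Max (left_nbrs E \<sigma> i))"
    unfolding left_nbrs_def by auto
qed

lemma peo_first_right_nbr_parent:
  assumes "graph V E" "peo V E \<sigma>" "i < k" "k < length \<sigma>" "E (\<sigma> ! i) (\<sigma> ! k)"
    and "\<forall>j. i < j \<and> j < k \<longrightarrow> \<not> E (\<sigma> ! i) (\<sigma> ! j)"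
  shows "Max (left_nbrs E \<sigma> k) = i"
proof -
  have "i \<in> left_nbrs E \<sigma> k"
    using assms(3,5) graph_sym[OF assms(1)] unfolding left_nbrs_def by blast
  then have "i \<le> Max (left_nbrs E \<sigma> k)"
    by (simp add: left_nbrs_def)
  moreover have "\<not> i < Max (left_nbrs E \<sigma> k)"
  proof
    assume "i < Max (left_nbrs E \<sigma> k)"
    moreover have "Max (left_nbrs E \<sigma> k) < k" "E (\<sigma> ! k) (\<sigma> ! Max (left_nbrs E \<sigma> k))"
      using left_nbrs_Max \<open>i \<in> left_nbrs E \<sigma> k\<close> by blast+
    moreover have "E (\<sigma> ! k) (\<sigma> ! i)"
      using assms(5) graph_sym[OF assms(1)] by blast
    ultimately have "E (\<sigma> ! i) (\<sigma> ! Max (left_nbrs E \<sigma> k))"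
      using peo_left_nbrs_adjacent[OF assms(2,4)] assms(3) by (metis less_irrefl)
    then show False
      using assms(6) \<open>i < Max (left_nbrs E \<sigma> k)\<close> \<open>Max (left_nbrs E \<sigma> k) < k\<close> by blast
  qed
  ultimately show ?thesis
    by simp
qed

lemma peo_simplicial_if_no_right_nbr:
  assumes "graph V E" "peo V E \<sigma>" "i < length \<sigma>"
    and "\<forall>k. i < k \<and> k < length \<sigma> \<longrightarrow> \<not> E (\<sigma> ! i) (\<sigma> ! k)"
  shows "simplicial V E (\<sigma> ! i)"
  unfolding simplicial_def
proof (intro ballI impI)
  fix u w assume "u \<in> V" "w \<in> V" and uw: "E (\<sigma> ! i) u \<and> E (\<sigma> ! i) w \<and> u \<noteq> w"
  then obtain j l where jl: "j < length \<sigma>" "\<sigma> ! j = u" "l < length \<sigma>" "\<sigma> ! l = w"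
    using assms(2) unfolding peo_def vertex_ordering_def by (metis in_set_conv_nth)
  have "j < i" "l < i"
    using jl uw assms(4) graph_irrefl[OF assms(1)] by (metis linorder_neqE_nat)+
  then show "E u w"
    using peo_left_nbrs_adjacent[OF assms(2,3)] jl uw by blast
qed

lemma peo_right_nbr_imp_ltree_child:
  assumes "graph V E" "peo V E \<sigma>" "i < k" "k < length \<sigma>" "E (\<sigma> ! i) (\<sigma> ! k)"
  obtains k' where "i < k'" "k' < length \<sigma>" "ltree_edge E \<sigma> (\<sigma> ! i) (\<sigma> ! k')"
proof -
  define k' where "k' = (LEAST k. i < k \<and> k < length \<sigma> \<and> E (\<sigma> ! i) (\<sigma> ! k))"
  have k': "i < k'" "k' < length \<sigma>" "E (\<sigma> ! i) (\<sigma> ! k')"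
    "\<forall>j. i < j \<and> j < k' \<longrightarrow> \<not> E (\<sigma> ! i) (\<sigma> ! j)"
    using LeastI[of "\<lambda>k. i < k \<and> k < length \<sigma> \<and> E (\<sigma> ! i) (\<sigma> ! k)", OF _] assms(3-5)
      not_less_Least less_trans unfolding k'_def by blast+
  have "Max (left_nbrs E \<sigma> k') = i"
    using peo_first_right_nbr_parent[OF assms(1,2) k'] .
  moreover have "left_nbrs E \<sigma> k' \<noteq> {}"
    using k'(1,3) graph_sym[OF assms(1)] unfolding left_nbrs_def by blast
  ultimately have "ltree_edge E \<sigma> (\<sigma> ! i) (\<sigma> ! k')"
    using k'(1,2) unfolding ltree_edge_def by (metis gr0I not_less0)
  then show thesis
    using that k'(1,2) by blast
qed

lemma lbranch_leaf_simplicial: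
  assumes "graph V E" "connected_graph V E" "peo V E \<sigma>" "lbranch_leaf E \<sigma> v"
  shows "simplicial V E v"
proof -
  have \<sigma>: "distinct \<sigma>"
    using assms(3) unfolding peo_def vertex_ordering_def by blast
  obtain i where i: "i < length \<sigma>" "\<sigma> ! i = v"
    using assms(4) unfolding lbranch_leaf_def by (metis in_set_conv_nth)
  have "0 < i"
    using assms(4) i unfolding lbranch_leaf_def by (metis gr0I hd_conv_nth list.size(3) not_less0)
  then have "left_nbrs E \<sigma> i \<noteq> {}"
    using peo_has_left_nbr[OF assms(1-3) _ i(1)] by blast
  define p where "p = Max (left_nbrs E \<sigma> i)"
  have "p < i" "ltree_edge E \<sigma> v (\<sigma> ! p)"
    using left_nbrs_Max[OF \<open>left_nbrs E \<sigma> i \<noteq> {}\<close>] \<open>0 < i\<close> i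
      \<open>left_nbrs E \<sigma> i \<noteq> {}\<close> unfolding p_def ltree_edge_def by blast+
  have "\<not> E (\<sigma> ! i) (\<sigma> ! k)" if k: "i < k" "k < length \<sigma>" for k
  proof
    assume "E (\<sigma> ! i) (\<sigma> ! k)"
    then obtain k' where k': "i < k'" "k' < length \<sigma>" "ltree_edge E \<sigma> v (\<sigma> ! k')"
      using peo_right_nbr_imp_ltree_child[OF assms(1,3) k] i(2) by metis
    moreover have "\<sigma> ! k' \<noteq> \<sigma> ! p"
      using \<sigma> k'(1,2) \<open>p < i\<close> i(1) nth_eq_iff_index_eq by fastforce
    ultimately show False
      using \<open>ltree_edge E \<sigma> v (\<sigma> ! p)\<close> assms(4) unfolding lbranch_leaf_def
      by (metis (mono_tags, lifting) card_1_singletonE mem_Collect_eq singletonD)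
  qed
  then show ?thesis
    using peo_simplicial_if_no_right_nbr[OF assms(1,3) i(1)] i(2) by blast
qed

lemma peo_last_lbranch_leaf:
  assumes "graph V E" "connected_graph V E" "peo V E \<sigma>" "2 \<le> length \<sigma>"
  shows "lbranch_leaf E \<sigma> (last \<sigma>)"
proof -
  have \<sigma>: "distinct \<sigma>"
    using assms(3) unfolding peo_def vertex_ordering_def by blast
  define i where "i = length \<sigma> - 1"
  have "\<sigma> \<noteq> []"
    using assms(4) by auto
  then have i: "0 < i" "i < length \<sigma>" "\<sigma> ! i = last \<sigma>"
    using assms(4) unfolding i_def by (auto simp: last_conv_nth)
  have nbrs: "left_nbrs E \<sigma> i \<noteq> {}"
    using peo_has_left_nbr[OF assms(1-3) i(1,2)] .
  have "{w. ltree_edge E \<sigma> (last \<sigma>) w} = {\<sigma> ! Max (left_nbrs E \<sigma> i)}"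
  proof (intro equalityI subsetI)
    fix w assume "w \<in> {w. ltree_edge E \<sigma> (last \<sigma>) w}"
    then obtain k where k: "0 < k" "k < length \<sigma>" "left_nbrs E \<sigma> k \<noteq> {}"
      and cases: "(last \<sigma> = \<sigma> ! k \<and> w = \<sigma> ! Max (left_nbrs E \<sigma> k)) \<or>
        (w = \<sigma> ! k \<and> last \<sigma> = \<sigma> ! Max (left_nbrs E \<sigma> k))"
      unfolding ltree_edge_def by blast
    have "Max (left_nbrs E \<sigma> k) < k"
      using left_nbrs_Max[OF k(3)] by blast
    then have "last \<sigma> \<noteq> \<sigma> ! Max (left_nbrs E \<sigma> k)"
      using \<sigma> i k(2) nth_eq_iff_index_eq unfolding i_def by fastforce
    then have "k = i"
      using cases \<sigma> i(2,3) k(2) nth_eq_iff_index_eq by metis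
    then show "w \<in> {\<sigma> ! Max (left_nbrs E \<sigma> i)}"
      using cases \<open>last \<sigma> \<noteq> \<sigma> ! Max (left_nbrs E \<sigma> k)\<close> by auto
  next
    fix w assume "w \<in> {\<sigma> ! Max (left_nbrs E \<sigma> i)}"
    then show "w \<in> {w. ltree_edge E \<sigma> (last \<sigma>) w}"
      using i nbrs unfolding ltree_edge_def by (intro CollectI exI[of _ i]) auto
  qed
  moreover have "last \<sigma> \<noteq> hd \<sigma>"
    using \<sigma> i nth_eq_iff_index_eq hd_conv_nth[of \<sigma>] by fastforce
  ultimately show ?thesis
    using \<open>\<sigma> \<noteq> []\<close> unfolding lbranch_leaf_def by auto
qed

theorem theorem9:
  fixes V :: "'a set" and E :: "'a \<Rightarrow> 'a \<Rightarrow> bool" and v :: 'a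
  assumes "graph V E" and "connected_graph V E" and "chordal V E"
    and "card V \<ge> 2" and "v \<in> V"
  shows "(\<exists>\<sigma>. peo V E \<sigma> \<and> lbranch_leaf E \<sigma> v) \<longleftrightarrow> simplicial V E v"
proof
  assume "\<exists>\<sigma>. peo V E \<sigma> \<and> lbranch_leaf E \<sigma> v"
  then show "simplicial V E v"
    using lbranch_leaf_simplicial[OF assms(1,2)] by blast
next
  assume "simplicial V E v"
  obtain \<sigma> where "peo (V - {v}) (induced_edges E (V - {v})) \<sigma>"
    using chordal_has_peo graph_induced_edges[OF assms(1)] chordal_induced_edges[OF assms(3)]
    by (metis Diff_subset)
  then have peo: "peo V E (\<sigma> @ [v])"
    using peo_snoc[OF _ assms(5) \<open>simplicial V E v\<close>] by blast
  then have "length (\<sigma> @ [v]) = card V"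
    unfolding peo_def vertex_ordering_def by (metis distinct_card)
  then have "lbranch_leaf E (\<sigma> @ [v]) (last (\<sigma> @ [v]))"
    using peo_last_lbranch_leaf[OF assms(1,2) peo] assms(4) by simp
  then show "\<exists>\<sigma>. peo V E \<sigma> \<and> lbranch_leaf E \<sigma> v"
    using peo by auto
qed

end
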